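(* Let $\{\alpha_I\}_{I\in\mathcal{D}}$ be a dyadic Carleson sequence: $\alpha_I\ge0$ and there is $C_0$ with $\sum_{I\subset J,\,I\in\mathcal{D}}\alpha_I|I|\le C_0|J|$ for all $J\in\mathcal{D}$. Let $\Psi:(0,1]\to(0,\infty)$ be a decreasing function such that $s\mapsto s\Psi(s)$ is increasing and $\int_0^1\frac{ds}{s\Psi(s)}<\infty$. Then there is a constant $C$ (depending only on $\Psi$ and $C_0$) such that for every weight $w$ on $\mathbb{R}$ with $\mathbf{n}_\Psi(N_I^w)<\infty$ for all $I\in\mathcal{D}$, and every $J\in\mathcal{D}$, \[ \sum_{I\in\mathcal{D},\,I\subset J}\mathbf{n}_\Psi(N_I^w)^{-1}\langle w\rangle_I^2\,\alpha_I\,|I|\le C\,w(J), \] where in the summation the intervals $I$ on which $w\equiv0$ are skipped.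
   Context: $\mathcal{D}$ is the standard dyadic lattice of intervals in $\mathbb{R}$. A weight is a nonnegative locally integrable function; $w(J)=\int_Jw$, $\langle w\rangle_I=\frac1{|I|}\int_Iw$. $N_I^w(t)=\frac{1}{|I|}|\{x\in I:w(x)>t\}|$ and $\mathbf{n}_\Psi(N)=\int_0^\infty N(t)\Psi(N(t))\,dt$ (integrand $0$ where $N(t)=0$). *)

theory Defs
  imports "HOL-Analysis.Analysis"
begin

definition dyadic_intervals :: "real set set" where
  "dyadic_intervals =
     {{of_int j * 2 powr of_int k ..< (of_int j + 1) * 2 powr of_int k} | j k. True}"

definition len :: "real set \<Rightarrow> real" where
  "len I = measure lborel I"

definition wmeas :: "(real \<Rightarrow> real) \<Rightarrow> real set \<Rightarrow> real" where
  "wmeas w J = (LINT x:J|lborel. w x)"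

definition avg :: "(real \<Rightarrow> real) \<Rightarrow> real set \<Rightarrow> real" where
  "avg w I = wmeas w I / len I"

definition is_weight :: "(real \<Rightarrow> real) \<Rightarrow> bool" where
  "is_weight w \<longleftrightarrow> (\<forall>x. 0 \<le> w x) \<and> (\<forall>K. compact K \<longrightarrow> set_integrable lborel K w)"

definition distN :: "(real \<Rightarrow> real) \<Rightarrow> real set \<Rightarrow> real \<Rightarrow> real" where
  "distN w I t = measure lborel {x \<in> I. w x > t} / len I"

definition nPsi :: "(real \<Rightarrow> real) \<Rightarrow> (real \<Rightarrow> real) \<Rightarrow> ennreal" where
  "nPsi \<Psi> N = (\<integral>\<^sup>+ t \<in> {0<..}. ennreal (if N t = 0 then 0 else N t * \<Psi> (N t)) \<partial>lborel)"

definition carleson :: "(real set \<Rightarrow> real) \<Rightarrow> real \<Rightarrow> bool" where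
  "carleson \<alpha> C0 \<longleftrightarrow> (\<forall>I\<in>dyadic_intervals. 0 \<le> \<alpha> I) \<and>
     (\<forall>J\<in>dyadic_intervals.
        (\<Sum>\<^sub>\<infinity>I\<in>{I\<in>dyadic_intervals. I \<subseteq> J}. ennreal (\<alpha> I * len I)) \<le> ennreal (C0 * len J))"

end

theory Submission
  imports Defs
begin

text \<open>
  Pointwise AM-GM applied to \<open>N = N\<^sub>I\<^sup>w\<close> (in effect Cauchy-Schwarz) gives
  \<open>\<langle>w\<rangle>\<^sub>I\<^sup>2 / n\<^sub>\<Psi>(N) \<le> \<integral>\<^sub>0\<^sup>\<infinity> \<phi>(N(t)) dt\<close> with \<open>\<phi>(s) = s / \<Psi>(s)\<close>.
  Multiplying by \<open>\<alpha>\<^sub>I |I|\<close>, summing and exchanging sum and integral, it suffices to bound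
  \<open>\<Sum>\<^sub>I\<^sub>\<subseteq>\<^sub>J \<alpha>\<^sub>I |I| \<phi>(|E \<inter> I| / |I|)\<close> by \<open>C |E \<inter> J|\<close> for every level set \<open>E = {w > t}\<close>;
  the layer-cake formula then turns \<open>\<integral> |{w > t} \<inter> J| dt\<close> into \<open>w(J)\<close>.
  As \<open>\<phi>\<close> increases, \<open>\<phi>(s) \<le> \<Sum>\<^sub>k 2\<^sup>-\<^sup>k / \<Psi>(2\<^sup>-\<^sup>k) [s > 2\<^sup>-\<^sup>k\<^sup>-\<^sup>1]\<close>, and a stopping-time
  argument over the maximal dyadic intervals on which \<open>E\<close> has density above \<open>\<lambda>\<close> bounds the
  Carleson sum over all such intervals by \<open>(C\<^sub>0 / \<lambda>) |E \<inter> J|\<close>. The constant obtained is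
  \<open>2 C\<^sub>0 \<Sum>\<^sub>k 1 / \<Psi>(2\<^sup>-\<^sup>k)\<close>, which is finite because \<open>s \<Psi>(s)\<close> increases and hence
  \<open>\<Sum>\<^sub>k 1 / \<Psi>(2\<^sup>-\<^sup>k) \<le> 2 \<integral>\<^sub>0\<^sup>1 ds / (s \<Psi>(s))\<close>.
\<close>

section \<open>Dyadic intervals\<close>

definition dyadic_interval :: "int \<Rightarrow> int \<Rightarrow> real set" where
  "dyadic_interval j k = {of_int j * 2 powr of_int k ..< (of_int j + 1) * 2 powr of_int k}"

lemma dyadic_intervals_eq_range: "dyadic_intervals = range (case_prod dyadic_interval)"
  unfolding dyadic_intervals_def dyadic_interval_def by auto

lemma countable_dyadic_subfamily: "countable {I\<in>dyadic_intervals. P I}"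
  by (rule countable_subset[of _ dyadic_intervals]) (auto simp: dyadic_intervals_eq_range)

lemma dyadic_intervalsE:
  assumes "I \<in> dyadic_intervals"
  obtains j k where "I = dyadic_interval j k"
  using assms unfolding dyadic_intervals_eq_range by auto

lemma mem_dyadic_interval_iff:
  "x \<in> dyadic_interval j k \<longleftrightarrow> of_int j \<le> x / 2 powr k \<and> x / 2 powr k < of_int j + 1"
  unfolding dyadic_interval_def by (auto simp: pos_le_divide_eq pos_divide_less_eq)

lemma dyadic_interval_index: "x \<in> dyadic_interval j k \<Longrightarrow> j = \<lfloor>x / 2 powr k\<rfloor>"
  by (metis mem_dyadic_interval_iff floor_unique)

lemma left_endpoint_in_dyadic_interval: "of_int j * 2 powr of_int k \<in> dyadic_interval j k"
  unfolding dyadic_interval_def by (simp add: algebra_simps)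

lemma emeasure_dyadic_interval: "emeasure lborel (dyadic_interval j k) = ennreal (2 powr k)"
  unfolding dyadic_interval_def by (simp add: algebra_simps)

lemma dyadic_interval_subset:
  assumes "k \<le> k'" "x \<in> dyadic_interval j k" "x \<in> dyadic_interval j' k'"
  shows "dyadic_interval j k \<subseteq> dyadic_interval j' k'"
proof
  \<comment> \<open>After rescaling by \<open>2\<^sup>-\<^sup>k\<close>, nesting is the integer fact \<open>j' 2\<^sup>m \<le> j < j + 1 \<le> (j' + 1) 2\<^sup>m\<close>.\<close>
  define m where "m = nat (k' - k)"
  define P :: real where "P = 2 ^ m"
  have scale: "y / 2 powr k' = (y / 2 powr k) / P" for y :: real
    using assms(1) by (simp add: P_def m_def powr_realpow[symmetric] powr_add[symmetric])
  have P_pos: "0 < P" by (simp add: P_def)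
  have int_P: "of_int (j' * 2 ^ m) = of_int j' * P" "of_int ((j' + 1) * 2 ^ m) = (of_int j' + 1) * P"
    by (simp_all add: P_def)
  have x_j: "of_int j \<le> x / 2 powr k" "x / 2 powr k < of_int j + 1"
    using assms(2) by (auto simp: mem_dyadic_interval_iff)
  have x_j': "of_int j' * P \<le> x / 2 powr k" "x / 2 powr k < (of_int j' + 1) * P"
    using assms(3) P_pos by (auto simp: mem_dyadic_interval_iff scale field_simps)
  have "real_of_int (j' * 2 ^ m) < of_int (j + 1)" "real_of_int j < of_int ((j' + 1) * 2 ^ m)"
    using x_j x_j' int_P by linarith+
  then have "j' * 2 ^ m \<le> j" "j + 1 \<le> (j' + 1) * 2 ^ m"
    by linarith+
  then have bounds: "of_int j' * P \<le> of_int j" "of_int j + 1 \<le> (of_int j' + 1) * P"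
    using int_P by (metis of_int_le_iff, metis of_int_add of_int_1 of_int_le_iff)
  fix y assume "y \<in> dyadic_interval j k"
  then have "of_int j' * P \<le> y / 2 powr k" "y / 2 powr k < (of_int j' + 1) * P"
    using bounds by (auto simp: mem_dyadic_interval_iff)
  then show "y \<in> dyadic_interval j' k'"
    using P_pos by (auto simp: mem_dyadic_interval_iff scale field_simps)
qed

lemma dyadic_interval_subset_scale_le:
  assumes "dyadic_interval j k \<subseteq> dyadic_interval j' k'"
  shows "k \<le> k'"
proof -
  have "emeasure lborel (dyadic_interval j k) \<le> emeasure lborel (dyadic_interval j' k')"
    using assms by (rule emeasure_mono) (simp add: dyadic_interval_def)
  then show ?thesis by (simp add: emeasure_dyadic_interval)
qed

lemma sets_dyadic: "I \<in> dyadic_intervals \<Longrightarrow> I \<in> sets borel"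
  by (erule dyadic_intervalsE) (simp add: dyadic_interval_def)

lemma sets_lborel_dyadic: "I \<in> dyadic_intervals \<Longrightarrow> I \<in> sets lborel"
  by (simp add: sets_dyadic)

lemma emeasure_dyadic: "I \<in> dyadic_intervals \<Longrightarrow> emeasure lborel I = ennreal (len I)"
  by (erule dyadic_intervalsE) (simp add: len_def measure_def emeasure_dyadic_interval)

lemma len_dyadic_pos: "I \<in> dyadic_intervals \<Longrightarrow> 0 < len I"
  by (erule dyadic_intervalsE) (simp add: len_def measure_def emeasure_dyadic_interval)

lemma dyadic_bounded: "I \<in> dyadic_intervals \<Longrightarrow> \<exists>a b. I \<subseteq> {a..b}"
proof (erule dyadic_intervalsE)
  fix j k assume "I = dyadic_interval j k"
  then show ?thesis
    by (intro exI[of _ "of_int j * 2 powr of_int k"] exI[of _ "(of_int j + 1) * 2 powr of_int k"])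
      (auto simp: dyadic_interval_def)
qed

lemma dyadic_nested_or_disjoint:
  assumes "I \<in> dyadic_intervals" "I' \<in> dyadic_intervals" "I \<inter> I' \<noteq> {}"
  shows "I \<subseteq> I' \<or> I' \<subseteq> I"
proof -
  obtain j k j' k' where I: "I = dyadic_interval j k" and I': "I' = dyadic_interval j' k'"
    using assms(1,2) by (metis dyadic_intervalsE)
  obtain x where "x \<in> I" "x \<in> I'" using assms(3) by auto
  then show ?thesis
    unfolding I I' using dyadic_interval_subset by (cases "k \<le> k'") auto
qed

lemma finite_dyadic_between:
  assumes "I \<in> dyadic_intervals" "J \<in> dyadic_intervals"
  shows "finite {Q\<in>dyadic_intervals. I \<subseteq> Q \<and> Q \<subseteq> J}"
proof -
  obtain j k j0 k0 where I: "I = dyadic_interval j k" and J: "J = dyadic_interval j0 k0"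
    using assms by (metis dyadic_intervalsE)
  define a :: real where "a = of_int j * 2 powr of_int k"
  have "a \<in> I" unfolding I a_def by (rule left_endpoint_in_dyadic_interval)
  then have "{Q\<in>dyadic_intervals. I \<subseteq> Q \<and> Q \<subseteq> J}
      \<subseteq> (\<lambda>k'. dyadic_interval \<lfloor>a / 2 powr k'\<rfloor> k') ` {k..k0}"
  proof clarify
    fix Q assume Q: "Q \<in> dyadic_intervals" "I \<subseteq> Q" "Q \<subseteq> J"
    then obtain j' k' where Q_eq: "Q = dyadic_interval j' k'" by (auto elim: dyadic_intervalsE)
    have "k \<le> k'" "k' \<le> k0"
      using Q unfolding Q_eq I J by (auto dest: dyadic_interval_subset_scale_le)
    moreover have "j' = \<lfloor>a / 2 powr k'\<rfloor>"
      using \<open>a \<in> I\<close> Q(2) unfolding Q_eq by (auto intro: dyadic_interval_index)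
    ultimately show "Q \<in> (\<lambda>k'. dyadic_interval \<lfloor>a / 2 powr k'\<rfloor> k') ` {k..k0}"
      unfolding Q_eq by auto
  qed
  then show ?thesis by (rule finite_subset) simp
qed

lemma emeasure_Int_dyadic:
  assumes "I \<in> dyadic_intervals" "E \<in> sets lborel"
  shows "emeasure lborel (E \<inter> I) = ennreal (measure lborel (E \<inter> I))"
    and "measure lborel (E \<inter> I) \<le> len I"
proof -
  have le: "emeasure lborel (E \<inter> I) \<le> ennreal (len I)"
    using assms by (metis emeasure_dyadic emeasure_mono inf_le2 sets_lborel_dyadic)
  then show eq: "emeasure lborel (E \<inter> I) = ennreal (measure lborel (E \<inter> I))"
    by (intro emeasure_eq_ennreal_measure) (auto simp: top_unique)
  show "measure lborel (E \<inter> I) \<le> len I"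
    using le len_dyadic_pos[OF assms(1)] unfolding eq by simp
qed

section \<open>Carleson sequences and stopping times\<close>

lemma infsum_ennreal_eq_nn_integral:
  fixes f :: "'a \<Rightarrow> ennreal"
  assumes A: "countable A"
  shows "infsum f A = (\<integral>\<^sup>+x. f x \<partial>count_space A)"
proof -
  have "sum f F \<le> (\<integral>\<^sup>+x. f x \<partial>count_space A)" if "finite F" "F \<subseteq> A" for F
  proof -
    have "sum f F = (\<integral>\<^sup>+x. f x \<partial>count_space F)"
      using that by (simp add: nn_integral_count_space_finite)
    also have "\<dots> = (\<integral>\<^sup>+x. f x * indicator F x \<partial>count_space UNIV)"
      by (simp add: nn_integral_count_space_indicator)
    also have "\<dots> \<le> (\<integral>\<^sup>+x. f x * indicator A x \<partial>count_space UNIV)"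
      using that by (intro nn_integral_mono) (auto split: split_indicator)
    finally show ?thesis by (simp add: nn_integral_count_space_indicator)
  qed
  moreover have "(\<integral>\<^sup>+x. f x \<partial>count_space A) \<le> (SUP F\<in>{F. finite F \<and> F \<subseteq> A}. sum f F)"
  proof (cases "finite A")
    case True
    then show ?thesis
      by (simp add: nn_integral_count_space_finite) (intro SUP_upper2[of A], auto)
  next
    case False
    note bij = bij_betw_from_nat_into[OF A False]
    have "(\<integral>\<^sup>+x. f x \<partial>count_space A) = (\<Sum>n. f (from_nat_into A n))"
      by (simp add: nn_integral_bij_count_space[symmetric, OF bij] nn_integral_count_space_nat)
    also have "\<dots> = (SUP n. \<Sum>i<n. f (from_nat_into A i))"
      by (rule suminf_eq_SUP)
    also have "\<dots> \<le> (SUP F\<in>{F. finite F \<and> F \<subseteq> A}. sum f F)"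
    proof (rule SUP_least)
      fix n
      have "inj_on (from_nat_into A) {..<n}"
        using bij by (auto simp: bij_betw_def inj_on_def)
      then have "(\<Sum>i<n. f (from_nat_into A i)) = sum f (from_nat_into A ` {..<n})"
        by (simp add: sum.reindex)
      also have "\<dots> \<le> (SUP F\<in>{F. finite F \<and> F \<subseteq> A}. sum f F)"
        using False by (intro SUP_upper) (auto intro: from_nat_into)
      finally show "(\<Sum>i<n. f (from_nat_into A i)) \<le> (SUP F\<in>{F. finite F \<and> F \<subseteq> A}. sum f F)" .
    qed
    finally show ?thesis .
  qed
  moreover have "infsum f A = (SUP F\<in>{F. finite F \<and> F \<subseteq> A}. sum f F)"
    by (rule nonneg_infsum_complete) simp
  ultimately show ?thesis
    by (metis (no_types, lifting) SUP_least antisym mem_Collect_eq)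
qed

lemma nn_integral_count_space_filter:
  "(\<integral>\<^sup>+x. f x * of_bool (P x) \<partial>count_space A) = (\<integral>\<^sup>+x. f x \<partial>count_space {x\<in>A. P x})"
  by (auto simp: nn_integral_count_space_indicator intro!: nn_integral_cong split: split_indicator)

lemma nn_integral_count_space_subset_mono:
  fixes f :: "'a \<Rightarrow> ennreal"
  shows "A \<subseteq> B \<Longrightarrow> (\<integral>\<^sup>+x. f x \<partial>count_space A) \<le> (\<integral>\<^sup>+x. f x \<partial>count_space B)"
  by (auto simp: nn_integral_count_space_indicator intro!: nn_integral_mono split: split_indicator)

lemma carleson_nonneg: "carleson \<alpha> C0 \<Longrightarrow> I \<in> dyadic_intervals \<Longrightarrow> 0 \<le> \<alpha> I"
  unfolding carleson_def by blast

lemma carleson_nn_integral_le: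
  assumes car: "carleson \<alpha> C0" and Q: "Q \<in> dyadic_intervals"
    and F: "F \<subseteq> {I\<in>dyadic_intervals. I \<subseteq> Q}"
  shows "(\<integral>\<^sup>+I. ennreal (\<alpha> I * len I) \<partial>count_space F) \<le> ennreal (max C0 0 * len Q)"
proof -
  have "(\<integral>\<^sup>+I. ennreal (\<alpha> I * len I) \<partial>count_space F)
      \<le> (\<integral>\<^sup>+I. ennreal (\<alpha> I * len I) \<partial>count_space {I\<in>dyadic_intervals. I \<subseteq> Q})"
    using F by (rule nn_integral_count_space_subset_mono)
  also have "\<dots> = (\<Sum>\<^sub>\<infinity>I\<in>{I\<in>dyadic_intervals. I \<subseteq> Q}. ennreal (\<alpha> I * len I))"
    by (rule infsum_ennreal_eq_nn_integral[OF countable_dyadic_subfamily, symmetric])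
  also have "\<dots> \<le> ennreal (C0 * len Q)"
    using car Q unfolding carleson_def by blast
  also have "\<dots> \<le> ennreal (max C0 0 * len Q)"
    using len_dyadic_pos[OF Q] by (intro ennreal_leI mult_right_mono) auto
  finally show ?thesis .
qed

definition maximal_elements :: "'a set set \<Rightarrow> 'a set set" where
  "maximal_elements F = {Q\<in>F. \<forall>Q'\<in>F. Q \<subseteq> Q' \<longrightarrow> Q' = Q}"

lemma maximal_elements_subset: "maximal_elements F \<subseteq> F"
  unfolding maximal_elements_def by auto

lemma maximal_elements_cover:
  assumes F: "F \<subseteq> {I\<in>dyadic_intervals. I \<subseteq> J}" and J: "J \<in> dyadic_intervals" and I: "I \<in> F"
  obtains Q where "Q \<in> maximal_elements F" "I \<subseteq> Q"
proof -
  define A where "A = {Q\<in>F. I \<subseteq> Q}"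
  have sub: "A \<subseteq> {Q\<in>dyadic_intervals. I \<subseteq> Q \<and> Q \<subseteq> J}"
    using F unfolding A_def by auto
  have "I \<in> dyadic_intervals" using F I by auto
  then have "finite A"
    by (rule finite_subset[OF sub finite_dyadic_between[OF _ J]])
  moreover have "I \<in> A" using I by (simp add: A_def)
  ultimately obtain Q where Q: "Q \<in> A" "I \<subseteq> Q" "\<forall>Q'\<in>A. Q \<subseteq> Q' \<longrightarrow> Q = Q'"
    using finite_has_maximal2 by blast
  have "Q \<in> maximal_elements F"
    using Q unfolding maximal_elements_def A_def by blast
  then show ?thesis using Q(2) by (rule that)
qed

lemma maximal_elements_disjoint:
  assumes "F \<subseteq> dyadic_intervals"
  shows "disjoint (maximal_elements F)"
proof (rule disjointI)
  fix Q1 Q2 assume Q: "Q1 \<in> maximal_elements F" "Q2 \<in> maximal_elements F" "Q1 \<noteq> Q2"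
  show "Q1 \<inter> Q2 = {}"
  proof (rule ccontr)
    assume "Q1 \<inter> Q2 \<noteq> {}"
    then have "Q1 \<subseteq> Q2 \<or> Q2 \<subseteq> Q1"
      using Q assms maximal_elements_subset by (intro dyadic_nested_or_disjoint) auto
    then show False using Q by (auto simp: maximal_elements_def)
  qed
qed

lemma carleson_nn_integral_le_density:
  assumes car: "carleson \<alpha> C0" and E: "E \<in> sets lborel" and Q: "Q \<in> dyadic_intervals"
    and lam: "0 < lam" and dense: "lam < measure lborel (E \<inter> Q) / len Q"
    and F: "F \<subseteq> {I\<in>dyadic_intervals. I \<subseteq> Q}"
  shows "(\<integral>\<^sup>+I. ennreal (\<alpha> I * len I) \<partial>count_space F) \<le> ennreal (max C0 0 / lam) * emeasure lborel (E \<inter> Q)"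
proof -
  define C where "C = max C0 0"
  have "C * len Q = C / lam * (lam * len Q)" using lam by simp
  also have "\<dots> \<le> C / lam * measure lborel (E \<inter> Q)"
    using dense lam len_dyadic_pos[OF Q]
    by (intro mult_left_mono) (auto simp: C_def pos_less_divide_eq less_imp_le)
  finally have "ennreal (C * len Q) \<le> ennreal (C / lam) * emeasure lborel (E \<inter> Q)"
    using lam by (simp add: emeasure_Int_dyadic[OF Q E] ennreal_mult[symmetric] C_def ennreal_leI)
  with carleson_nn_integral_le[OF car Q F] show ?thesis
    unfolding C_def by (rule order_trans)
qed

lemma carleson_sum_density_gt_le:
  assumes car: "carleson \<alpha> C0" and E: "E \<in> sets lborel"
    and J: "J \<in> dyadic_intervals" and lam: "0 < lam"
  shows "(\<integral>\<^sup>+I. ennreal (\<alpha> I * len I) * of_bool (lam < measure lborel (E \<inter> I) / len I)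
            \<partial>count_space {I\<in>dyadic_intervals. I \<subseteq> J})
         \<le> ennreal (max C0 0 / lam) * emeasure lborel (E \<inter> J)"
proof -
  define F where "F = {I\<in>dyadic_intervals. I \<subseteq> J \<and> lam < measure lborel (E \<inter> I) / len I}"
  define M where "M = maximal_elements F"
  define a where "a I = ennreal (\<alpha> I * len I)" for I
  have F_sub: "F \<subseteq> {I\<in>dyadic_intervals. I \<subseteq> J}" by (auto simp: F_def)
  have M_F: "M \<subseteq> F" unfolding M_def by (rule maximal_elements_subset)
  have cntM: "countable M"
    using M_F F_sub by (blast intro: countable_subset[OF _ countable_dyadic_subfamily])
  have "(\<integral>\<^sup>+I. a I \<partial>count_space F) \<le> (\<integral>\<^sup>+I. \<integral>\<^sup>+Q. a I * of_bool (I \<subseteq> Q) \<partial>count_space M \<partial>count_space F)"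
  proof (rule nn_integral_mono)
    fix I assume "I \<in> space (count_space F)"
    then obtain Q where "Q \<in> M" "I \<subseteq> Q"
      using maximal_elements_cover[OF F_sub J] unfolding M_def by auto
    then show "a I \<le> (\<integral>\<^sup>+Q. a I * of_bool (I \<subseteq> Q) \<partial>count_space M)"
      using nn_integral_ge_point[of Q M "\<lambda>Q. a I * of_bool (I \<subseteq> Q)"] by simp
  qed
  also have "\<dots> = (\<integral>\<^sup>+Q. \<integral>\<^sup>+I. a I \<partial>count_space {I\<in>F. I \<subseteq> Q} \<partial>count_space M)"
    by (subst nn_integral_count_space_nn_integral[OF cntM])
      (simp_all add: nn_integral_count_space_filter)
  also have "\<dots> \<le> (\<integral>\<^sup>+Q. ennreal (max C0 0 / lam) * emeasure lborel (E \<inter> Q) \<partial>count_space M)"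
    unfolding a_def using M_F
    by (intro nn_integral_mono carleson_nn_integral_le_density[OF car E _ lam]) (auto simp: F_def)
  also have "\<dots> = ennreal (max C0 0 / lam) * (\<integral>\<^sup>+Q. emeasure lborel (E \<inter> Q) \<partial>count_space M)"
    by (rule nn_integral_cmult) simp
  also have "(\<integral>\<^sup>+Q. emeasure lborel (E \<inter> Q) \<partial>count_space M) = emeasure lborel (\<Union>Q\<in>M. E \<inter> Q)"
  proof (rule emeasure_UN_countable[symmetric])
    show "disjoint_family_on (\<lambda>Q. E \<inter> Q) M"
      using maximal_elements_disjoint[of F] F_sub unfolding M_def disjoint_family_on_def disjoint_def
      by blast
    show "E \<inter> Q \<in> sets lborel" if "Q \<in> M" for Q
      using that M_F F_sub by (intro sets.Int E sets_lborel_dyadic) auto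
  qed (use cntM in simp)
  also have "\<dots> \<le> emeasure lborel (E \<inter> J)"
    using M_F F_sub by (intro emeasure_mono sets.Int E sets_lborel_dyadic[OF J]) auto
  finally show ?thesis
    unfolding nn_integral_count_space_filter F_def a_def by (simp add: mult_left_mono conj_assoc)
qed

section \<open>Dyadic discretisation of \<open>\<Psi>\<close>\<close>

text \<open>\<open>mulPsi \<Psi>\<close> is the integrand of \<open>nPsi \<Psi>\<close>; \<open>divPsi \<Psi>\<close> is its partner in the AM-GM step,
  \<open>mulPsi \<Psi> s * divPsi \<Psi> s = s\<^sup>2\<close>.\<close>

definition mulPsi :: "(real \<Rightarrow> real) \<Rightarrow> real \<Rightarrow> real" where
  "mulPsi \<Psi> s = (if s = 0 then 0 else s * \<Psi> s)"

definition divPsi :: "(real \<Rightarrow> real) \<Rightarrow> real \<Rightarrow> real" where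
  "divPsi \<Psi> s = (if s = 0 then 0 else s / \<Psi> s)"

lemma nPsi_eq_mulPsi: "nPsi \<Psi> N = (\<integral>\<^sup>+t\<in>{0<..}. ennreal (mulPsi \<Psi> (N t)) \<partial>lborel)"
  by (simp add: nPsi_def mulPsi_def)

lemma dyadic_level_exists:
  fixes s :: real
  assumes "0 < s" "s \<le> 1"
  obtains k where "(1/2) ^ Suc k < s" "s \<le> (1/2) ^ k"
proof -
  have ex: "\<exists>n. (1/2::real) ^ n < s"
    using real_arch_pow_inv[of s "1/2"] assms by auto
  define n where "n = (LEAST n. (1/2::real) ^ n < s)"
  have n: "(1/2::real) ^ n < s"
    unfolding n_def by (rule LeastI_ex[OF ex])
  with assms obtain k where k: "n = Suc k" by (cases n) auto
  have "\<not> (1/2::real) ^ k < s"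
    using k not_less_Least[of k "\<lambda>n. (1/2::real) ^ n < s"] unfolding n_def by simp
  then show ?thesis using n k that by simp
qed

lemma dyadic_level_unique:
  fixes s :: real
  assumes "(1/2) ^ Suc k < s" "s \<le> (1/2) ^ k" "(1/2) ^ Suc k' < s" "s \<le> (1/2) ^ k'"
  shows "k = k'"
proof (rule ccontr)
  assume "k \<noteq> k'"
  then consider "Suc k \<le> k'" | "Suc k' \<le> k" by linarith
  then show False
  proof cases
    case 1
    then have "(1/2::real) ^ k' \<le> (1/2) ^ Suc k" by (intro power_decreasing) auto
    then show False using assms by linarith
  next
    case 2
    then have "(1/2::real) ^ k \<le> (1/2) ^ Suc k'" by (intro power_decreasing) auto
    then show False using assms by linarith
  qed
qed

lemma suminf_dyadic_level_indicator:
  fixes f :: "nat \<Rightarrow> ennreal"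
  assumes "(1/2) ^ Suc k < s" "s \<le> (1/2) ^ k"
  shows "(\<Sum>i. f i * indicator {(1/2::real) ^ Suc i<..(1/2) ^ i} s) = f k"
proof -
  define g where "g i = f i * indicator {(1/2::real) ^ Suc i<..(1/2) ^ i} s" for i
  have "g i = 0" if "i \<noteq> k" for i
    using dyadic_level_unique[OF assms, of i] that unfolding g_def
    by (metis greaterThanAtMost_iff indicator_simps(2) mult_zero_right)
  then have "(\<Sum>i. g i) = (\<Sum>i\<in>{k}. g i)"
    by (intro suminf_finite) auto
  also have "\<dots> = f k"
    using assms by (simp add: g_def)
  finally show ?thesis unfolding g_def .
qed

lemma suminf_dyadic_step_le_inv_mulPsi:
  fixes \<Psi> :: "real \<Rightarrow> real"
  assumes pos: "\<forall>s\<in>{0<..1}. 0 < \<Psi> s" and inc: "mono_on {0<..1} (\<lambda>s. s * \<Psi> s)"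
  shows "(\<Sum>k. ennreal (1 / ((1/2) ^ k * \<Psi> ((1/2) ^ k))) * indicator {(1/2::real) ^ Suc k<..(1/2) ^ k} s)
         \<le> ennreal (1 / (s * \<Psi> s)) * indicator {0<..1} s"
proof (cases "0 < s \<and> s \<le> 1")
  case True
  then obtain k where k: "(1/2) ^ Suc k < s" "s \<le> (1/2) ^ k"
    using dyadic_level_exists by blast
  have "s * \<Psi> s \<le> (1/2) ^ k * \<Psi> ((1/2) ^ k)"
    using inc True k by (auto simp: mono_on_def power_le_one)
  moreover have "0 < s * \<Psi> s" using True pos by auto
  ultimately have "1 / ((1/2) ^ k * \<Psi> ((1/2) ^ k)) \<le> 1 / (s * \<Psi> s)"
    by (simp add: frac_le)
  then show ?thesis
    using True suminf_dyadic_level_indicator[OF k, of "\<lambda>k. ennreal (1 / ((1/2) ^ k * \<Psi> ((1/2) ^ k)))"]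
    by (simp add: ennreal_leI)
next
  case False
  have "(1/2::real) ^ k \<le> 1" "0 < (1/2::real) ^ Suc k" for k
    by (simp_all add: power_le_one)
  then have "s \<notin> {(1/2::real) ^ Suc k<..(1/2) ^ k}" for k
    using False by (meson greaterThanAtMost_iff order.trans order.strict_trans)
  then show ?thesis by simp
qed

lemma suminf_inv_Psi_dyadic_le:
  fixes \<Psi> :: "real \<Rightarrow> real"
  assumes pos: "\<forall>s\<in>{0<..1}. 0 < \<Psi> s" and inc: "mono_on {0<..1} (\<lambda>s. s * \<Psi> s)"
  shows "(\<Sum>k. ennreal (1 / \<Psi> ((1/2) ^ k)))
         \<le> 2 * (\<integral>\<^sup>+s\<in>{0<..1}. ennreal (1 / (s * \<Psi> s)) \<partial>lborel)"
proof -
  define P where "P k = {(1/2::real) ^ Suc k<..(1/2) ^ k}" for k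
  define c where "c k = 1 / ((1/2::real) ^ k * \<Psi> ((1/2) ^ k))" for k
  have P_sets[measurable]: "P k \<in> sets lborel" for k
    by (simp add: P_def)
  have "ennreal (1 / \<Psi> ((1/2) ^ k)) = 2 * (ennreal (c k) * emeasure lborel (P k))" for k
  proof -
    define L :: real where "L = (1/2) ^ k - (1/2) ^ Suc k"
    have L: "emeasure lborel (P k) = ennreal L" "0 \<le> L"
      unfolding P_def L_def by (auto intro: power_decreasing)
    have \<Psi>_pos: "0 < \<Psi> ((1/2::real) ^ k)"
      using pos by (simp add: power_le_one)
    then have "1 / \<Psi> ((1/2) ^ k) = 2 * (c k * L)"
      by (simp add: c_def L_def field_simps)
    moreover have "0 \<le> c k" using \<Psi>_pos by (simp add: c_def)
    ultimately show ?thesis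
      using L by (simp add: ennreal_mult)
  qed
  then have "(\<Sum>k. ennreal (1 / \<Psi> ((1/2) ^ k)))
      = 2 * (\<Sum>k. \<integral>\<^sup>+s. ennreal (c k) * indicator (P k) s \<partial>lborel)"
    by (simp only: nn_integral_cmult_indicator[OF P_sets] ennreal_suminf_cmult)
  also have "(\<Sum>k. \<integral>\<^sup>+s. ennreal (c k) * indicator (P k) s \<partial>lborel)
      = (\<integral>\<^sup>+s. (\<Sum>k. ennreal (c k) * indicator (P k) s) \<partial>lborel)"
    by (rule nn_integral_suminf[symmetric]) simp
  also have "\<dots> \<le> (\<integral>\<^sup>+s\<in>{0<..1}. ennreal (1 / (s * \<Psi> s)) \<partial>lborel)"
    unfolding c_def P_def by (intro nn_integral_mono suminf_dyadic_step_le_inv_mulPsi[OF pos inc])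
  finally show ?thesis by (simp add: mult_left_mono)
qed

lemma divPsi_le_dyadic_sum:
  fixes \<Psi> :: "real \<Rightarrow> real"
  assumes pos: "\<forall>s\<in>{0<..1}. 0 < \<Psi> s" and dec: "antimono_on {0<..1} \<Psi>"
    and s: "0 \<le> s" "s \<le> 1"
  shows "ennreal (divPsi \<Psi> s)
         \<le> (\<Sum>k. ennreal ((1/2) ^ k / \<Psi> ((1/2) ^ k)) * of_bool ((1/2) ^ Suc k < s))"
proof (cases "s = 0")
  case True
  then show ?thesis by (simp add: divPsi_def)
next
  case False
  with s have "0 < s" by simp
  then obtain k where k: "(1/2) ^ Suc k < s" "s \<le> (1/2) ^ k"
    using s(2) dyadic_level_exists by blast
  have "0 < \<Psi> ((1/2::real) ^ k)" using pos by (simp add: power_le_one)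
  moreover have "\<Psi> ((1/2) ^ k) \<le> \<Psi> s"
    using dec k s False by (auto simp: monotone_on_def power_le_one)
  ultimately have "s / \<Psi> s \<le> (1/2) ^ k / \<Psi> ((1/2) ^ k)"
    using k s False by (intro frac_le) auto
  moreover define g where "g i = ennreal ((1/2) ^ i / \<Psi> ((1/2) ^ i)) * of_bool ((1/2) ^ Suc i < s)" for i
  ultimately have "ennreal (divPsi \<Psi> s) \<le> g k"
    using False k by (simp add: divPsi_def ennreal_leI)
  also have "\<dots> \<le> (\<Sum>i. g i)"
    using sum_le_suminf[of g "{k}"] by simp
  finally show ?thesis unfolding g_def .
qed

lemma carleson_divPsi_sum_le:
  fixes \<Psi> :: "real \<Rightarrow> real"
  assumes pos: "\<forall>s\<in>{0<..1}. 0 < \<Psi> s" and dec: "antimono_on {0<..1} \<Psi>"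
    and car: "carleson \<alpha> C0" and E[measurable]: "E \<in> sets lborel" and J: "J \<in> dyadic_intervals"
  shows "(\<integral>\<^sup>+I. ennreal (\<alpha> I * len I) * ennreal (divPsi \<Psi> (measure lborel (E \<inter> I) / len I))
            \<partial>count_space {I\<in>dyadic_intervals. I \<subseteq> J})
         \<le> ennreal (2 * max C0 0) * (\<Sum>k. ennreal (1 / \<Psi> ((1/2) ^ k))) * emeasure lborel (E \<inter> J)"
proof -
  define D where "D = {I\<in>dyadic_intervals. I \<subseteq> J}"
  define a where "a I = ennreal (\<alpha> I * len I)" for I
  define s where "s I = measure lborel (E \<inter> I) / len I" for I
  define c where "c k = ennreal ((1/2::real) ^ k / \<Psi> ((1/2) ^ k))" for k
  define lam where "lam k = (1/2::real) ^ Suc k" for k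
  define C where "C = max C0 0"
  define \<mu> where "\<mu> = emeasure lborel (E \<inter> J)"
  have \<Psi>_pos: "0 < \<Psi> ((1/2::real) ^ k)" for k
    using pos by (simp add: power_le_one)
  have "(\<integral>\<^sup>+I. a I * ennreal (divPsi \<Psi> (s I)) \<partial>count_space D)
      \<le> (\<integral>\<^sup>+I. (\<Sum>k. c k * (a I * of_bool (lam k < s I))) \<partial>count_space D)"
  proof (rule nn_integral_mono)
    fix I assume "I \<in> space (count_space D)"
    then have I: "I \<in> dyadic_intervals" by (simp add: D_def)
    have "0 \<le> s I" "s I \<le> 1"
      using emeasure_Int_dyadic(2)[OF I E] len_dyadic_pos[OF I] by (auto simp: s_def)
    then have "ennreal (divPsi \<Psi> (s I)) \<le> (\<Sum>k. c k * of_bool (lam k < s I))"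
      unfolding c_def lam_def by (rule divPsi_le_dyadic_sum[OF pos dec])
    then have "a I * ennreal (divPsi \<Psi> (s I)) \<le> a I * (\<Sum>k. c k * of_bool (lam k < s I))"
      by (rule mult_left_mono) simp
    then show "a I * ennreal (divPsi \<Psi> (s I)) \<le> (\<Sum>k. c k * (a I * of_bool (lam k < s I)))"
      by (simp add: ac_simps)
  qed
  also have "\<dots> = (\<Sum>k. c k * (\<integral>\<^sup>+I. a I * of_bool (lam k < s I) \<partial>count_space D))"
    by (simp add: nn_integral_suminf nn_integral_cmult)
  also have "\<dots> \<le> (\<Sum>k. c k * (ennreal (C / lam k) * \<mu>))"
    unfolding a_def s_def D_def C_def \<mu>_def
    by (intro suminf_le summableI mult_left_mono carleson_sum_density_gt_le[OF car E J])
      (simp_all add: lam_def)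
  also have "\<dots> = (\<Sum>k. ennreal (2 * C) * ennreal (1 / \<Psi> ((1/2) ^ k)) * \<mu>)"
  proof -
    have "c k * ennreal (C / lam k) = ennreal (2 * C) * ennreal (1 / \<Psi> ((1/2) ^ k))" for k
    proof -
      have "(1/2::real) ^ k / \<Psi> ((1/2) ^ k) * (C / lam k) = 2 * C * (1 / \<Psi> ((1/2) ^ k))"
        by (simp add: lam_def field_simps)
      then show ?thesis
        using \<Psi>_pos[of k] unfolding c_def
        by (simp add: ennreal_mult[symmetric] C_def lam_def)
    qed
    then show ?thesis by (simp add: mult.assoc[symmetric])
  qed
  also have "\<dots> = ennreal (2 * C) * (\<Sum>k. ennreal (1 / \<Psi> ((1/2) ^ k))) * \<mu>"
    by simp
  finally show ?thesis unfolding D_def a_def s_def C_def \<mu>_def .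
qed

section \<open>Weights and their distribution functions\<close>

lemma is_weight_nonneg: "is_weight w \<Longrightarrow> 0 \<le> w x"
  unfolding is_weight_def by blast

lemma set_integrable_weight: "is_weight w \<Longrightarrow> compact K \<Longrightarrow> set_integrable lborel K w"
  unfolding is_weight_def by blast

lemma borel_measurable_weight:
  assumes "is_weight w"
  shows "w \<in> borel_measurable borel"
proof -
  define u where "u n x = indicator {- real n..real n} x *\<^sub>R w x" for n x
  have "set_integrable lborel {- real n..real n} w" for n
    by (rule set_integrable_weight[OF assms compact_Icc])
  then have u_measurable: "u n \<in> borel_measurable lborel" for n
    unfolding u_def set_integrable_def by (rule borel_measurable_integrable)
  have u_lim: "(\<lambda>n. u n x) \<longlonglongrightarrow> w x" for x
  proof (rule tendsto_eventually)
    obtain N :: nat where N: "\<bar>x\<bar> \<le> real N" using real_arch_simple by blast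
    have "u n x = w x" if "n \<ge> N" for n
    proof -
      have "real N \<le> real n" using that by simp
      then have "x \<in> {- real n..real n}" using N by auto
      then show ?thesis unfolding u_def by simp
    qed
    then show "eventually (\<lambda>n. u n x = w x) sequentially"
      unfolding eventually_sequentially by blast
  qed
  have "w \<in> borel_measurable lborel"
    by (rule borel_measurable_LIMSEQ_real[where u=u, OF u_lim u_measurable])
  then show ?thesis by (simp only: measurable_lborel2)
qed

lemma wmeas_nonneg: "is_weight w \<Longrightarrow> 0 \<le> wmeas w I"
  unfolding wmeas_def set_lebesgue_integral_def
  by (intro Bochner_Integration.integral_nonneg) (simp add: is_weight_nonneg)

lemma nn_integral_weight_dyadic:
  assumes w: "is_weight w" and I: "I \<in> dyadic_intervals"
  shows "(\<integral>\<^sup>+x\<in>I. ennreal (w x) \<partial>lborel) = ennreal (wmeas w I)"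
proof -
  obtain a b where "I \<subseteq> {a..b}" using dyadic_bounded[OF I] by blast
  then have "set_integrable lborel I w"
    by (rule set_integrable_subset[OF set_integrable_weight[OF w compact_Icc] sets_lborel_dyadic[OF I]])
  then have "integrable lborel (\<lambda>x. indicator I x * w x)"
    unfolding set_integrable_def by simp
  then have "(\<integral>\<^sup>+x. ennreal (indicator I x * w x) \<partial>lborel) = ennreal (wmeas w I)"
    unfolding wmeas_def set_lebesgue_integral_def
    by (subst nn_integral_eq_integral) (auto simp: is_weight_nonneg[OF w])
  moreover have "ennreal (indicator I x * w x) = ennreal (w x) * indicator I x" for x
    by (simp split: split_indicator)
  ultimately show ?thesis by simp
qed

lemma nn_integral_layer_cake:
  fixes w :: "real \<Rightarrow> real"
  assumes w[measurable]: "w \<in> borel_measurable borel" and nonneg: "\<And>x. 0 \<le> w x"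
    and S[measurable]: "S \<in> sets borel"
  shows "(\<integral>\<^sup>+x\<in>S. ennreal (w x) \<partial>lborel) = (\<integral>\<^sup>+t\<in>{0<..}. emeasure lborel {x\<in>S. t < w x} \<partial>lborel)"
proof -
  define f where "f x t = (indicator {p. fst p \<in> S \<and> 0 < snd p \<and> snd p < w (fst p)} (x, t) :: ennreal)"
    for x t
  have f_measurable: "case_prod f \<in> borel_measurable (lborel \<Otimes>\<^sub>M lborel)"
    unfolding f_def by measurable
  have "(\<integral>\<^sup>+x\<in>S. ennreal (w x) \<partial>lborel) = (\<integral>\<^sup>+x. \<integral>\<^sup>+t. f x t \<partial>lborel \<partial>lborel)"
  proof (rule nn_integral_cong)
    fix x
    have "(\<integral>\<^sup>+t. f x t \<partial>lborel) = (\<integral>\<^sup>+t. indicator {0<..<w x} t * indicator S x \<partial>lborel)"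
      by (intro nn_integral_cong) (auto simp: f_def split: split_indicator)
    also have "\<dots> = ennreal (w x) * indicator S x"
      using nonneg[of x] by (subst nn_integral_multc) auto
    finally show "ennreal (w x) * indicator S x = (\<integral>\<^sup>+t. f x t \<partial>lborel)" by simp
  qed
  also have "\<dots> = (\<integral>\<^sup>+t. \<integral>\<^sup>+x. f x t \<partial>lborel \<partial>lborel)"
    by (rule lborel_pair.Fubini'[OF f_measurable, symmetric])
  also have "\<dots> = (\<integral>\<^sup>+t\<in>{0<..}. emeasure lborel {x\<in>S. t < w x} \<partial>lborel)"
  proof (rule nn_integral_cong)
    fix t :: real
    have "(\<integral>\<^sup>+x. f x t \<partial>lborel) = (\<integral>\<^sup>+x. indicator {x\<in>S. t < w x} x * indicator {0<..} t \<partial>lborel)"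
      by (intro nn_integral_cong) (auto simp: f_def split: split_indicator)
    also have "\<dots> = emeasure lborel {x\<in>S. t < w x} * indicator {0<..} t"
      by (subst nn_integral_multc) auto
    finally show "(\<integral>\<^sup>+x. f x t \<partial>lborel) = emeasure lborel {x\<in>S. t < w x} * indicator {0<..} t" .
  qed
  finally show ?thesis .
qed

context
  fixes w :: "real \<Rightarrow> real" and I :: "real set"
  assumes w[measurable]: "w \<in> borel_measurable borel" and I: "I \<in> dyadic_intervals"
begin

lemma emeasure_superlevel_dyadic: "emeasure lborel {x\<in>I. t < w x} = ennreal (len I * distN w I t)"
  using emeasure_Int_dyadic(1)[OF I, of "{x. t < w x}"] len_dyadic_pos[OF I]
  by (simp add: Int_def conj_commute distN_def)

lemma distN_nonneg: "0 \<le> distN w I t"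
  using len_dyadic_pos[OF I] by (simp add: distN_def)

lemma distN_le_one: "distN w I t \<le> 1"
  using emeasure_Int_dyadic(2)[OF I, of "{x. t < w x}"] len_dyadic_pos[OF I]
  by (simp add: Int_def conj_commute distN_def)

lemma distN_antimono:
  assumes "t1 \<le> t2"
  shows "distN w I t2 \<le> distN w I t1"
proof -
  have [measurable]: "I \<in> sets borel" by (rule sets_dyadic[OF I])
  have "{x\<in>I. t1 < w x} \<in> sets borel" by measurable
  then have "emeasure lborel {x\<in>I. t2 < w x} \<le> emeasure lborel {x\<in>I. t1 < w x}"
    using assms by (intro emeasure_mono) auto
  then show ?thesis
    using len_dyadic_pos[OF I] distN_nonneg[of t1] distN_nonneg[of t2]
    by (simp add: emeasure_superlevel_dyadic)
qed

lemma borel_measurable_comp_distN: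
  fixes G :: "real \<Rightarrow> real"
  assumes G: "mono_on {0..1} G"
  shows "(\<lambda>t. G (distN w I t)) \<in> borel_measurable borel"
proof -
  have "mono (\<lambda>t. - G (distN w I t))"
  proof (rule monoI)
    fix t1 t2 :: real assume "t1 \<le> t2"
    then have "G (distN w I t2) \<le> G (distN w I t1)"
      using distN_nonneg distN_le_one by (intro mono_onD[OF G] distN_antimono) auto
    then show "- G (distN w I t1) \<le> - G (distN w I t2)" by simp
  qed
  then have "(\<lambda>t. - (- G (distN w I t))) \<in> borel_measurable borel"
    by (intro borel_measurable_uminus borel_measurable_mono)
  then show ?thesis by simp
qed


lemma borel_measurable_emeasure_superlevel:
  "(\<lambda>t. emeasure lborel {x\<in>I. t < w x}) \<in> borel_measurable borel"
proof -
  have "distN w I \<in> borel_measurable borel"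
    using borel_measurable_comp_distN[of "\<lambda>s. s"] by (simp add: mono_on_def)
  then show ?thesis
    by (simp add: emeasure_superlevel_dyadic)
qed

end

section \<open>The AM-GM estimate\<close>

lemma mulPsi_nonneg:
  assumes "\<forall>s\<in>{0<..1}. 0 < \<Psi> s" "0 \<le> s" "s \<le> 1"
  shows "0 \<le> mulPsi \<Psi> s"
  using assms by (auto simp: mulPsi_def less_le)

lemma divPsi_nonneg:
  assumes "\<forall>s\<in>{0<..1}. 0 < \<Psi> s" "0 \<le> s" "s \<le> 1"
  shows "0 \<le> divPsi \<Psi> s"
  using assms by (auto simp: divPsi_def less_le)

lemma mono_on_mulPsi:
  assumes pos: "\<forall>s\<in>{0<..1}. 0 < \<Psi> s" and inc: "mono_on {0<..1} (\<lambda>s. s * \<Psi> s)"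
  shows "mono_on {0..1} (mulPsi \<Psi>)"
proof (rule mono_onI)
  fix r s :: real assume rs: "r \<in> {0..1}" "s \<in> {0..1}" "r \<le> s"
  show "mulPsi \<Psi> r \<le> mulPsi \<Psi> s"
  proof (cases "r = 0")
    case True
    then show ?thesis using rs mulPsi_nonneg[OF pos] by (simp add: mulPsi_def)
  next
    case False
    then show ?thesis using rs inc by (auto simp: mulPsi_def mono_on_def)
  qed
qed

lemma mono_on_divPsi:
  assumes pos: "\<forall>s\<in>{0<..1}. 0 < \<Psi> s" and dec: "antimono_on {0<..1} \<Psi>"
  shows "mono_on {0..1} (divPsi \<Psi>)"
proof (rule mono_onI)
  fix r s :: real assume rs: "r \<in> {0..1}" "s \<in> {0..1}" "r \<le> s"
  show "divPsi \<Psi> r \<le> divPsi \<Psi> s"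
  proof (cases "r = 0")
    case True
    then show ?thesis using rs divPsi_nonneg[OF pos] by (simp add: divPsi_def)
  next
    case False
    then have "0 < r" "0 < s" using rs by auto
    moreover have "\<Psi> s \<le> \<Psi> r" using dec rs \<open>0 < r\<close> by (auto simp: monotone_on_def)
    moreover have "0 < \<Psi> s" using pos rs \<open>0 < s\<close> by auto
    ultimately show ?thesis using rs by (simp add: divPsi_def frac_le)
  qed
qed

lemma two_mul_le_mulPsi_divPsi:
  assumes pos: "\<forall>s\<in>{0<..1}. 0 < \<Psi> s" and s: "0 \<le> s" "s \<le> 1" and c: "0 < c"
  shows "2 * s \<le> c * mulPsi \<Psi> s + divPsi \<Psi> s / c"
proof (cases "s = 0")
  case False
  then have p: "0 < \<Psi> s" using pos s by auto
  have "0 \<le> s * (c * \<Psi> s - 1)\<^sup>2 / (c * \<Psi> s)"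
    using s c p by simp
  also have "\<dots> = c * (s * \<Psi> s) + s / \<Psi> s / c - 2 * s"
    using c p by (simp add: field_simps power2_eq_square)
  finally show ?thesis using False by (simp add: mulPsi_def divPsi_def)
qed (simp add: mulPsi_def divPsi_def)

lemma nn_integral_superlevel_eq_wmeas:
  assumes w: "is_weight w" and I: "I \<in> dyadic_intervals"
  shows "(\<integral>\<^sup>+t\<in>{0<..}. emeasure lborel {x\<in>I. t < w x} \<partial>lborel) = ennreal (wmeas w I)"
  using nn_integral_layer_cake[OF borel_measurable_weight[OF w] is_weight_nonneg[OF w] sets_dyadic[OF I]]
    nn_integral_weight_dyadic[OF w I] by simp

lemma nn_integral_distN_eq_avg:
  assumes w: "is_weight w" and I: "I \<in> dyadic_intervals"
  shows "(\<integral>\<^sup>+t\<in>{0<..}. ennreal (distN w I t) \<partial>lborel) = ennreal (avg w I)"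
proof -
  note w_measurable[measurable] = borel_measurable_weight[OF w]
  have distN_measurable[measurable]: "distN w I \<in> borel_measurable borel"
    using borel_measurable_comp_distN[OF w_measurable I, of "\<lambda>s. s"] by (simp add: mono_on_def)
  have L: "0 < len I" by (rule len_dyadic_pos[OF I])
  have "ennreal (len I) * (\<integral>\<^sup>+t\<in>{0<..}. ennreal (distN w I t) \<partial>lborel)
      = (\<integral>\<^sup>+t\<in>{0<..}. emeasure lborel {x\<in>I. t < w x} \<partial>lborel)"
    using L distN_nonneg[OF w_measurable I]
    by (subst nn_integral_cmult[symmetric])
      (auto simp: emeasure_superlevel_dyadic[OF w_measurable I] ennreal_mult mult.assoc)
  also have "\<dots> = ennreal (len I) * ennreal (avg w I)"
    using L wmeas_nonneg[OF w]
    by (simp add: nn_integral_superlevel_eq_wmeas[OF w I] avg_def ennreal_mult[symmetric])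
  finally show ?thesis
    using L by (subst (asm) ennreal_mult_cancel_left) auto
qed

lemma ennreal_sq_div_le_of_two_mul_le:
  fixes m :: real and N A :: ennreal
  assumes m: "0 \<le> m" and amgm: "\<And>c. 0 < c \<Longrightarrow> 2 * ennreal m \<le> ennreal c * N + ennreal (1 / c) * A"
  shows "ennreal (m\<^sup>2 / enn2real N) \<le> A"
proof (cases "m = 0 \<or> enn2real N = 0 \<or> A = \<infinity>")
  case False
  define n where "n = enn2real N"
  have m_pos: "0 < m" using False m by auto
  have "n \<noteq> 0" using False by (auto simp: n_def)
  then have n_pos: "0 < n" using enn2real_nonneg[of N] unfolding n_def by linarith
  then have N: "N = ennreal n" unfolding n_def by (cases N) auto
  obtain a where a: "A = ennreal a" "0 \<le> a" using False by (cases A) auto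
  define c where "c = m / n"
  have c_pos: "0 < c" using m_pos n_pos by (simp add: c_def)
  have "2 * ennreal m = ennreal (2 * m)"
    by (simp add: ennreal_mult')
  moreover have "ennreal c * N + ennreal (1 / c) * A = ennreal (c * n + 1 / c * a)"
    using c_pos n_pos a unfolding N by (simp add: ennreal_mult'[symmetric] ennreal_plus)
  ultimately have "ennreal (2 * m) \<le> ennreal (c * n + 1 / c * a)"
    using amgm[OF c_pos] by simp
  moreover have "0 \<le> c * n + 1 / c * a"
    using c_pos n_pos a by simp
  ultimately have "2 * m \<le> c * n + 1 / c * a"
    using ennreal_le_iff by blast
  then have "m * m \<le> a * n"
    using m_pos n_pos by (simp add: c_def field_simps)
  then have "m\<^sup>2 / n \<le> a"
    using n_pos by (simp add: power2_eq_square pos_divide_le_eq)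
  then show ?thesis using a by (simp add: n_def ennreal_leI)
qed auto

lemma avg_sq_div_nPsi_le:
  fixes \<Psi> :: "real \<Rightarrow> real"
  assumes pos: "\<forall>s\<in>{0<..1}. 0 < \<Psi> s" and dec: "antimono_on {0<..1} \<Psi>"
    and inc: "mono_on {0<..1} (\<lambda>s. s * \<Psi> s)"
    and w: "is_weight w" and I: "I \<in> dyadic_intervals"
  shows "ennreal ((avg w I)\<^sup>2 / enn2real (nPsi \<Psi> (distN w I)))
         \<le> (\<integral>\<^sup>+t\<in>{0<..}. ennreal (divPsi \<Psi> (distN w I t)) \<partial>lborel)"
proof (rule ennreal_sq_div_le_of_two_mul_le)
  show "0 \<le> avg w I"
    using wmeas_nonneg[OF w] len_dyadic_pos[OF I] by (simp add: avg_def)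
  fix c :: real assume c: "0 < c"
  define N where "N = distN w I"
  note w_measurable[measurable] = borel_measurable_weight[OF w]
  have N_bounds: "0 \<le> N t" "N t \<le> 1" for t
    unfolding N_def using distN_nonneg distN_le_one w_measurable I by auto
  have [measurable]: "N \<in> borel_measurable borel"
    using borel_measurable_comp_distN[OF w_measurable I, of "\<lambda>s. s"] by (simp add: N_def mono_on_def)
  have [measurable]: "(\<lambda>t. mulPsi \<Psi> (N t)) \<in> borel_measurable borel"
    unfolding N_def by (rule borel_measurable_comp_distN[OF w_measurable I mono_on_mulPsi[OF pos inc]])
  have [measurable]: "(\<lambda>t. divPsi \<Psi> (N t)) \<in> borel_measurable borel"
    unfolding N_def by (rule borel_measurable_comp_distN[OF w_measurable I mono_on_divPsi[OF pos dec]])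
  have pointwise: "2 * ennreal (N t)
      \<le> ennreal c * ennreal (mulPsi \<Psi> (N t)) + ennreal (1 / c) * ennreal (divPsi \<Psi> (N t))" for t
  proof -
    have "ennreal (2 * N t) \<le> ennreal (c * mulPsi \<Psi> (N t) + 1 / c * divPsi \<Psi> (N t))"
      using two_mul_le_mulPsi_divPsi[OF pos N_bounds c] by (intro ennreal_leI) simp
    then have "2 * ennreal (N t) \<le> ennreal c * ennreal (mulPsi \<Psi> (N t)) + ennreal (divPsi \<Psi> (N t) / c)"
      using c mulPsi_nonneg[OF pos N_bounds] divPsi_nonneg[OF pos N_bounds]
      by (simp add: ennreal_plus ennreal_mult ennreal_mult')
    moreover have "ennreal (divPsi \<Psi> (N t) / c) = ennreal (1 / c) * ennreal (divPsi \<Psi> (N t))"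
      using c by (simp add: ennreal_mult'[symmetric])
    ultimately show ?thesis by simp
  qed
  have "2 * ennreal (avg w I) = (\<integral>\<^sup>+t. 2 * (ennreal (N t) * indicator {0<..} t) \<partial>lborel)"
    using nn_integral_distN_eq_avg[OF w I, folded N_def]
    by (subst nn_integral_cmult) (measurable, simp_all add: greaterThan_def[symmetric])
  also have "\<dots> \<le> (\<integral>\<^sup>+t. ennreal c * (ennreal (mulPsi \<Psi> (N t)) * indicator {0<..} t)
      + ennreal (1 / c) * (ennreal (divPsi \<Psi> (N t)) * indicator {0<..} t) \<partial>lborel)"
    using pointwise by (intro nn_integral_mono) (simp add: ac_simps split: split_indicator)
  also have "\<dots> = ennreal c * nPsi \<Psi> N + ennreal (1 / c) * (\<integral>\<^sup>+t\<in>{0<..}. ennreal (divPsi \<Psi> (N t)) \<partial>lborel)"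
    by (simp add: nPsi_eq_mulPsi nn_integral_add nn_integral_cmult)
  finally show "2 * ennreal (avg w I) \<le> ennreal c * nPsi \<Psi> (distN w I)
      + ennreal (1 / c) * (\<integral>\<^sup>+t\<in>{0<..}. ennreal (divPsi \<Psi> (distN w I t)) \<partial>lborel)"
    unfolding N_def .
qed

section \<open>Summation over the dyadic subintervals\<close>

lemma carleson_divPsi_distN_sum_le:
  fixes \<Psi> :: "real \<Rightarrow> real"
  assumes pos: "\<forall>s\<in>{0<..1}. 0 < \<Psi> s" and dec: "antimono_on {0<..1} \<Psi>"
    and car: "carleson \<alpha> C0" and w[measurable]: "w \<in> borel_measurable borel"
    and J: "J \<in> dyadic_intervals"
  shows "(\<integral>\<^sup>+I. ennreal (\<alpha> I * len I) * ennreal (divPsi \<Psi> (distN w I t))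
            \<partial>count_space {I\<in>dyadic_intervals. I \<subseteq> J})
         \<le> ennreal (2 * max C0 0) * (\<Sum>k. ennreal (1 / \<Psi> ((1/2) ^ k))) * emeasure lborel {x\<in>J. t < w x}"
proof -
  have E: "{x. t < w x} \<in> sets lborel" by measurable
  have "distN w I t = measure lborel ({x. t < w x} \<inter> I) / len I" for I
    unfolding distN_def by (simp add: Int_def conj_commute)
  moreover have "{x\<in>J. t < w x} = {x. t < w x} \<inter> J" by auto
  ultimately show ?thesis
    using carleson_divPsi_sum_le[OF pos dec car E J] by simp
qed

lemma carleson_divPsi_integral_le:
  fixes \<Psi> :: "real \<Rightarrow> real"
  assumes pos: "\<forall>s\<in>{0<..1}. 0 < \<Psi> s" and dec: "antimono_on {0<..1} \<Psi>"
    and car: "carleson \<alpha> C0" and w: "is_weight w" and J: "J \<in> dyadic_intervals"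
  shows "(\<integral>\<^sup>+I. ennreal (\<alpha> I * len I) * (\<integral>\<^sup>+t\<in>{0<..}. ennreal (divPsi \<Psi> (distN w I t)) \<partial>lborel)
            \<partial>count_space {I\<in>dyadic_intervals. I \<subseteq> J})
         \<le> ennreal (2 * max C0 0) * (\<Sum>k. ennreal (1 / \<Psi> ((1/2) ^ k))) * ennreal (wmeas w J)"
proof -
  define D where "D = {I\<in>dyadic_intervals. I \<subseteq> J}"
  define K where "K = ennreal (2 * max C0 0) * (\<Sum>k. ennreal (1 / \<Psi> ((1/2) ^ k)))"
  define h where "h I t = ennreal (divPsi \<Psi> (distN w I t)) * indicator {0<..} t" for I t
  note w_measurable[measurable] = borel_measurable_weight[OF w]
  have h_measurable[measurable]: "h I \<in> borel_measurable borel" if "I \<in> D" for I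
  proof -
    have [measurable]: "(\<lambda>t. divPsi \<Psi> (distN w I t)) \<in> borel_measurable borel"
      using that unfolding D_def
      by (intro borel_measurable_comp_distN[OF w_measurable _ mono_on_divPsi[OF pos dec]]) simp
    show ?thesis unfolding h_def by measurable
  qed
  have [measurable]: "(\<lambda>t. emeasure lborel {x\<in>J. t < w x}) \<in> borel_measurable borel"
    by (rule borel_measurable_emeasure_superlevel[OF w_measurable J])
  have "(\<integral>\<^sup>+I. ennreal (\<alpha> I * len I) * (\<integral>\<^sup>+t\<in>{0<..}. ennreal (divPsi \<Psi> (distN w I t)) \<partial>lborel)
      \<partial>count_space D) = (\<integral>\<^sup>+I. \<integral>\<^sup>+t. ennreal (\<alpha> I * len I) * h I t \<partial>lborel \<partial>count_space D)"
  proof (rule nn_integral_cong)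
    fix I assume "I \<in> space (count_space D)"
    then have "(\<integral>\<^sup>+t. ennreal (\<alpha> I * len I) * h I t \<partial>lborel) = ennreal (\<alpha> I * len I) * (\<integral>\<^sup>+t. h I t \<partial>lborel)"
      using h_measurable[of I] by (intro nn_integral_cmult) simp
    then show "ennreal (\<alpha> I * len I) * (\<integral>\<^sup>+t\<in>{0<..}. ennreal (divPsi \<Psi> (distN w I t)) \<partial>lborel)
        = (\<integral>\<^sup>+t. ennreal (\<alpha> I * len I) * h I t \<partial>lborel)"
      by (simp add: h_def)
  qed
  also have "\<dots> = (\<integral>\<^sup>+t. \<integral>\<^sup>+I. ennreal (\<alpha> I * len I) * h I t \<partial>count_space D \<partial>lborel)"
    using h_measurable
    by (intro nn_integral_count_space_nn_integral[symmetric]) (auto simp: D_def countable_dyadic_subfamily)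
  also have "\<dots> \<le> (\<integral>\<^sup>+t. K * (emeasure lborel {x\<in>J. t < w x} * indicator {0<..} t) \<partial>lborel)"
  proof (rule nn_integral_mono)
    fix t
    have "(\<integral>\<^sup>+I. ennreal (\<alpha> I * len I) * h I t \<partial>count_space D) = (\<integral>\<^sup>+I. ennreal (\<alpha> I * len I)
        * ennreal (divPsi \<Psi> (distN w I t)) \<partial>count_space D) * indicator {0<..} t"
      unfolding h_def by (subst nn_integral_multc[symmetric]) (simp_all add: mult.assoc)
    also have "\<dots> \<le> K * emeasure lborel {x\<in>J. t < w x} * indicator {0<..} t"
      unfolding D_def K_def
      by (intro mult_right_mono carleson_divPsi_distN_sum_le[OF pos dec car w_measurable J]) simp
    finally show "(\<integral>\<^sup>+I. ennreal (\<alpha> I * len I) * h I t \<partial>count_space D)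
        \<le> K * (emeasure lborel {x\<in>J. t < w x} * indicator {0<..} t)"
      by (simp add: mult.assoc)
  qed
  also have "\<dots> = K * ennreal (wmeas w J)"
    by (simp add: nn_integral_cmult nn_integral_superlevel_eq_wmeas[OF w J])
  finally show ?thesis unfolding D_def K_def .
qed

lemma weighted_sum_le_divPsi_integral:
  fixes \<Psi> :: "real \<Rightarrow> real"
  assumes pos: "\<forall>s\<in>{0<..1}. 0 < \<Psi> s" and dec: "antimono_on {0<..1} \<Psi>"
    and inc: "mono_on {0<..1} (\<lambda>s. s * \<Psi> s)"
    and car: "carleson \<alpha> C0" and w: "is_weight w"
  shows "(\<Sum>\<^sub>\<infinity>I\<in>{I\<in>dyadic_intervals. I \<subseteq> J \<and> wmeas w I \<noteq> 0}.
            ennreal ((avg w I)\<^sup>2 * \<alpha> I * len I / enn2real (nPsi \<Psi> (distN w I))))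
         \<le> (\<integral>\<^sup>+I. ennreal (\<alpha> I * len I) * (\<integral>\<^sup>+t\<in>{0<..}. ennreal (divPsi \<Psi> (distN w I t)) \<partial>lborel)
            \<partial>count_space {I\<in>dyadic_intervals. I \<subseteq> J})"
proof -
  define S where "S = {I\<in>dyadic_intervals. I \<subseteq> J \<and> wmeas w I \<noteq> 0}"
  have "(\<Sum>\<^sub>\<infinity>I\<in>S. ennreal ((avg w I)\<^sup>2 * \<alpha> I * len I / enn2real (nPsi \<Psi> (distN w I))))
      = (\<integral>\<^sup>+I. ennreal ((avg w I)\<^sup>2 * \<alpha> I * len I / enn2real (nPsi \<Psi> (distN w I))) \<partial>count_space S)"
    unfolding S_def by (rule infsum_ennreal_eq_nn_integral[OF countable_dyadic_subfamily])
  also have "\<dots> \<le> (\<integral>\<^sup>+I. ennreal (\<alpha> I * len I)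
      * (\<integral>\<^sup>+t\<in>{0<..}. ennreal (divPsi \<Psi> (distN w I t)) \<partial>lborel) \<partial>count_space S)"
  proof (rule nn_integral_mono)
    fix I assume "I \<in> space (count_space S)"
    then have I: "I \<in> dyadic_intervals" by (simp add: S_def)
    define r where "r = (avg w I)\<^sup>2 / enn2real (nPsi \<Psi> (distN w I))"
    have "ennreal ((avg w I)\<^sup>2 * \<alpha> I * len I / enn2real (nPsi \<Psi> (distN w I)))
        = ennreal (\<alpha> I * len I) * ennreal r"
      using carleson_nonneg[OF car I] len_dyadic_pos[OF I]
      by (simp add: r_def ennreal_mult'[symmetric] field_simps)
    also have "\<dots> \<le> ennreal (\<alpha> I * len I) * (\<integral>\<^sup>+t\<in>{0<..}. ennreal (divPsi \<Psi> (distN w I t)) \<partial>lborel)"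
      unfolding r_def by (intro mult_left_mono avg_sq_div_nPsi_le[OF pos dec inc w I]) simp
    finally show "ennreal ((avg w I)\<^sup>2 * \<alpha> I * len I / enn2real (nPsi \<Psi> (distN w I)))
        \<le> ennreal (\<alpha> I * len I) * (\<integral>\<^sup>+t\<in>{0<..}. ennreal (divPsi \<Psi> (distN w I t)) \<partial>lborel)" .
  qed
  also have "\<dots> \<le> (\<integral>\<^sup>+I. ennreal (\<alpha> I * len I)
      * (\<integral>\<^sup>+t\<in>{0<..}. ennreal (divPsi \<Psi> (distN w I t)) \<partial>lborel) \<partial>count_space {I\<in>dyadic_intervals. I \<subseteq> J})"
    by (rule nn_integral_count_space_subset_mono) (auto simp: S_def)
  finally show ?thesis unfolding S_def .
qed

theorem theorem2p4:
  fixes \<Psi> :: "real \<Rightarrow> real" and C0 :: real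
  assumes pos: "\<forall>s\<in>{0<..1}. 0 < \<Psi> s"
    and dec: "antimono_on {0<..1} \<Psi>"
    and inc: "mono_on {0<..1} (\<lambda>s. s * \<Psi> s)"
    and int: "(\<integral>\<^sup>+ s \<in> {0<..1}. ennreal (1 / (s * \<Psi> s)) \<partial>lborel) < \<infinity>"
  shows "\<exists>C. \<forall>\<alpha> w J. carleson \<alpha> C0 \<longrightarrow> is_weight w \<longrightarrow>
           (\<forall>I\<in>dyadic_intervals. nPsi \<Psi> (distN w I) < \<infinity>) \<longrightarrow> J \<in> dyadic_intervals \<longrightarrow>
           (\<Sum>\<^sub>\<infinity>I\<in>{I\<in>dyadic_intervals. I \<subseteq> J \<and> wmeas w I \<noteq> 0}.
              ennreal ((avg w I)\<^sup>2 * \<alpha> I * len I / enn2real (nPsi \<Psi> (distN w I))))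
           \<le> ennreal (C * wmeas w J)"
proof -
  define K where "K = (\<Sum>k. ennreal (1 / \<Psi> ((1/2) ^ k)))"
  have "K \<le> 2 * (\<integral>\<^sup>+ s \<in> {0<..1}. ennreal (1 / (s * \<Psi> s)) \<partial>lborel)"
    unfolding K_def by (rule suminf_inv_Psi_dyadic_le[OF pos inc])
  also have "\<dots> < \<infinity>" using int by (simp add: ennreal_mult_less_top)
  finally have K: "K = ennreal (enn2real K)" by (simp add: less_top)
  show ?thesis
  proof (intro exI allI impI)
    fix \<alpha> w J
    assume car: "carleson \<alpha> C0" and w: "is_weight w" and J: "J \<in> dyadic_intervals"
    note weighted_sum_le_divPsi_integral[OF pos dec inc car w]
    also note carleson_divPsi_integral_le[OF pos dec car w J]
    also have "ennreal (2 * max C0 0) * (\<Sum>k. ennreal (1 / \<Psi> ((1/2) ^ k))) * ennreal (wmeas w J)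
        = ennreal (2 * max C0 0 * enn2real K * wmeas w J)"
      using wmeas_nonneg[OF w] by (subst K_def[symmetric], subst K) (simp add: ennreal_mult)
    finally show "(\<Sum>\<^sub>\<infinity>I\<in>{I\<in>dyadic_intervals. I \<subseteq> J \<and> wmeas w I \<noteq> 0}.
        ennreal ((avg w I)\<^sup>2 * \<alpha> I * len I / enn2real (nPsi \<Psi> (distN w I))))
      \<le> ennreal (2 * max C0 0 * enn2real K * wmeas w J)" .
  qed
qed

end
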